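(* Let $n\ge 3$, $m=\frac{n-2}{n+2}$, $\rho>0$, $\beta>\frac{\rho}{2}$, and $\alpha=\frac{2\beta+\rho}{1-m}$. Let $v$ be a radially symmetric solution of $$\frac{n-1}{m}\Delta v^m+\alpha v+\beta x\cdot\nabla v=0,\quad v>0,\quad\text{in }\mathbb{R}^n,$$ so that $g=v^{\frac{4}{n+2}}dx^2$ is a locally conformally flat non-compact gradient shrinking Yamabe soliton. Then $$\lim_{r\to\infty} r^2 v(r)^{\frac{4}{n+2}}=\frac{(n-1)(n-2)}{\rho}.$$
   Context: $dx^2$ denotes the Euclidean metric on $\mathbb{R}^n$; $v(r)$ denotes the value of $v$ at any point with $|x|=r$. *)

theory Defs
  imports "HOL-Analysis.Analysis"
begin

definition partial :: "'n::finite \<Rightarrow> (real^'n \<Rightarrow> real) \<Rightarrow> real^'n \<Rightarrow> real" where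
  "partial i f x = deriv (\<lambda>t. f (x + t *\<^sub>R axis i 1)) 0"

definition partials_exist :: "(real^'n::finite \<Rightarrow> real) \<Rightarrow> bool" where
  "partials_exist f \<longleftrightarrow> (\<forall>i x. (\<lambda>t. f (x + t *\<^sub>R axis i 1)) differentiable (at 0))"

definition C2 :: "(real^'n::finite \<Rightarrow> real) \<Rightarrow> bool" where
  "C2 f \<longleftrightarrow> continuous_on UNIV f \<and> partials_exist f \<and>
     (\<forall>i. continuous_on UNIV (partial i f) \<and> partials_exist (partial i f) \<and>
          (\<forall>j. continuous_on UNIV (partial j (partial i f))))"

definition laplacian :: "(real^'n::finite \<Rightarrow> real) \<Rightarrow> real^'n \<Rightarrow> real" where
  "laplacian f x = (\<Sum>i\<in>UNIV. partial i (partial i f) x)"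

definition radial_deriv :: "(real^'n::finite \<Rightarrow> real) \<Rightarrow> real^'n \<Rightarrow> real" where
  "radial_deriv f x = (\<Sum>i\<in>UNIV. x $ i * partial i f x)"

end

(*
  Put r = e^s and let M = \<phi>^m for the radial profile \<phi> of v. In the Emden-Fowler variables
  Q(s) = r^k M(r), with k = (n-2)/2, and u(s) = r^2 \<phi>(r)^(1-m) = Q(s)^((1-m)/m), the radial
  equation becomes the damped oscillator
    (n-1)/m Q'' = (n+2)/4 Q (A - \<rho> u) - (\<beta>/m) u Q',      A = (n-1)(n-2),
  whose energy  E = (n-1)/(2m) Q'^2 - (n+2)/4 Q^2 (A/2 - \<rho> m/(1+m) u)  satisfies
  E' = -(\<beta>/m) u Q'^2. Since E \<rightarrow> 0 as s \<rightarrow> -\<infinity> and E strictly decreases there,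
  E \<le> 0, which bounds u, Q and Q', and E is eventually negative, which keeps Q and u
  away from 0 for large s. Hence E converges, the dissipation forces Q' \<rightarrow> 0, the equation then forces
  Q (A - \<rho> u) \<rightarrow> 0, and so u \<rightarrow> A/\<rho>, which is the claim.
*)

theory Submission
  imports Defs
begin

section \<open>Decay lemmas for real functions\<close>

lemma tendsto_zero_mult_bounded:
  fixes f g :: "'a \<Rightarrow> real"
  assumes "(f \<longlongrightarrow> 0) F" and "eventually (\<lambda>x. \<bar>g x\<bar> \<le> B) F"
  shows "((\<lambda>x. g x * f x) \<longlongrightarrow> 0) F"
proof (rule tendsto_0_le[OF assms(1)])
  show "eventually (\<lambda>x. norm (g x * f x) \<le> norm (f x) * B) F"
    using assms(2)
  proof eventually_elim
    case (elim x)
    have "\<bar>g x\<bar> * \<bar>f x\<bar> \<le> B * \<bar>f x\<bar>" using elim by (rule mult_right_mono) simp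
    then show ?case by (simp add: abs_mult algebra_simps)
  qed
qed

lemma DERIV_abs_diff_le:
  fixes f f' :: "real \<Rightarrow> real"
  assumes "\<And>x. x \<in> {a..b} \<Longrightarrow> (f has_real_derivative f' x) (at x)"
    and "\<And>x. x \<in> {a..b} \<Longrightarrow> \<bar>f' x\<bar> \<le> B"
    and "x \<in> {a..b}" "y \<in> {a..b}"
  shows "\<bar>f x - f y\<bar> \<le> B * \<bar>x - y\<bar>"
proof -
  have "norm (f x - f y) \<le> B * norm (x - y)"
    by (rule field_differentiable_bound[where S="{a..b}" and f'=f'])
      (use assms in \<open>auto intro: has_field_derivative_at_within\<close>)
  then show ?thesis by simp
qed

lemma antimono_bdd_below_tendsto:
  fixes f :: "real \<Rightarrow> real"
  assumes "antimono f" and "\<And>s. B \<le> f s"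
  shows "(f \<longlongrightarrow> Inf (range f)) at_top"
proof (rule order_tendstoI)
  have bdd: "bdd_below (range f)" using assms(2) by (auto intro!: bdd_belowI[of _ B])
  fix a assume "a < Inf (range f)"
  then show "eventually (\<lambda>s. a < f s) at_top"
    using cInf_lower[OF _ bdd] by (intro always_eventually allI) (metis order_less_le_trans rangeI)
next
  fix a assume "Inf (range f) < a"
  then obtain t where "f t < a" using cInf_lessD[of "range f" a] by auto
  show "eventually (\<lambda>s. f s < a) at_top"
    using eventually_ge_at_top[of t]
  proof eventually_elim
    case (elim s)
    then show ?case using antimonoD[OF assms(1) elim] \<open>f t < a\<close> by simp
  qed
qed

lemma tendsto_zero_if_dissipative:
  fixes E E' P P' :: "real \<Rightarrow> real"
  assumes E_lim: "(E \<longlongrightarrow> L) at_top" and c: "c > 0"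
    and E_deriv: "\<And>s. s \<ge> T \<Longrightarrow> (E has_real_derivative E' s) (at s)"
    and dissipation: "\<And>s. s \<ge> T \<Longrightarrow> E' s \<le> - c * (P s)\<^sup>2"
    and P_deriv: "\<And>s. s \<ge> T \<Longrightarrow> (P has_real_derivative P' s) (at s)"
    and P'_bound: "\<And>s. s \<ge> T \<Longrightarrow> \<bar>P' s\<bar> \<le> K"
  shows "(P \<longlongrightarrow> 0) at_top"
proof (rule tendstoI)
  txt \<open>If \<open>\<bar>P s\<bar> \<ge> \<epsilon>\<close>, then \<open>\<bar>P\<bar> \<ge> \<epsilon>/2\<close> on \<open>[s, s + \<tau>]\<close>, so \<open>E\<close> drops by at least
    \<open>c \<tau> (\<epsilon>/2)\<^sup>2\<close> there, which is impossible once \<open>E\<close> is close to its limit.\<close>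
  fix \<epsilon> :: real assume \<epsilon>: "\<epsilon> > 0"
  define \<Lambda> where "\<Lambda> = \<bar>K\<bar> + 1"
  define \<tau> where "\<tau> = \<epsilon> / (2 * \<Lambda>)"
  define \<eta> where "\<eta> = c * \<tau> * (\<epsilon>/2)\<^sup>2"
  have \<Lambda>: "\<Lambda> > 0" by (simp add: \<Lambda>_def add_nonneg_pos)
  have \<tau>: "\<tau> > 0" and \<eta>: "\<eta> > 0" using \<epsilon> c \<Lambda> by (simp_all add: \<tau>_def \<eta>_def)
  obtain S where S: "\<And>s. s \<ge> S \<Longrightarrow> \<bar>E s - L\<bar> < \<eta>/2"
    using tendstoD[OF E_lim, of "\<eta>/2"] \<eta> by (auto simp: eventually_at_top_linorder dist_real_def)
  have small: "\<bar>P s\<bar> < \<epsilon>" if s: "s \<ge> max S T" for s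
  proof (rule ccontr)
    assume far: "\<not> \<bar>P s\<bar> < \<epsilon>"
    have near: "\<bar>P t\<bar> \<ge> \<epsilon>/2" if t: "t \<in> {s..s+\<tau>}" for t
    proof -
      have "\<bar>P t - P s\<bar> \<le> K * \<bar>t - s\<bar>"
        by (rule DERIV_abs_diff_le[of s "s+\<tau>" P P' K t s]) (use s t \<tau> P_deriv P'_bound in auto)
      also have "\<dots> \<le> \<Lambda> * \<tau>"
        using t \<tau> by (intro mult_mono) (auto simp: \<Lambda>_def)
      also have "\<dots> = \<epsilon>/2" using \<Lambda> by (simp add: \<tau>_def)
      finally show ?thesis using far by linarith
    qed
    obtain z where z: "s < z" "z < s + \<tau>" and "E (s+\<tau>) - E s = \<tau> * E' z"
      using MVT2[of s "s+\<tau>" E E'] \<tau> s E_deriv by auto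
    moreover have "c * (\<epsilon>/2)\<^sup>2 \<le> c * (P z)\<^sup>2"
      using near[of z] z c \<epsilon> abs_le_square_iff[of "\<epsilon>/2" "P z"] by (intro mult_left_mono) auto
    then have "E' z \<le> - c * (\<epsilon>/2)\<^sup>2" using dissipation[of z] z s by simp
    then have "\<tau> * E' z \<le> - \<eta>"
      using \<tau> mult_left_mono[of "E' z" "- c * (\<epsilon>/2)\<^sup>2" \<tau>] by (simp add: \<eta>_def mult_ac)
    moreover have "\<bar>E s - L\<bar> < \<eta>/2" "\<bar>E (s+\<tau>) - L\<bar> < \<eta>/2" using S s \<tau> by auto
    ultimately show False by linarith
  qed
  show "eventually (\<lambda>s. dist (P s) 0 < \<epsilon>) at_top"
    using eventually_ge_at_top[of "max S T"] by eventually_elim (simp add: small dist_real_def)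
qed

lemma tendsto_zero_if_derivative_tendsto:
  fixes P H H' R :: "real \<Rightarrow> real"
  assumes P_lim: "(P \<longlongrightarrow> 0) at_top" and R_lim: "(R \<longlongrightarrow> 0) at_top"
    and H'_lim: "(H' \<longlongrightarrow> 0) at_top" and a: "a \<noteq> 0"
    and P_deriv: "\<And>s. s \<ge> T \<Longrightarrow> (P has_real_derivative a * H s + R s) (at s)"
    and H_deriv: "\<And>s. s \<ge> T \<Longrightarrow> (H has_real_derivative H' s) (at s)"
  shows "(H \<longlongrightarrow> 0) at_top"
proof (rule tendstoI)
  txt \<open>By the mean value theorem \<open>a H + R\<close> is small somewhere on \<open>[s, s + 1]\<close>, and \<open>H\<close>
    varies little on that interval.\<close>
  fix \<epsilon> :: real assume \<epsilon>: "\<epsilon> > 0"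
  define \<Lambda> where "\<Lambda> = 3 + \<bar>a\<bar>"
  define \<delta> where "\<delta> = \<bar>a\<bar> * \<epsilon> / (2 * \<Lambda>)"
  have \<Lambda>: "\<Lambda> > 0" by (simp add: \<Lambda>_def add_pos_nonneg)
  have \<delta>: "\<delta> > 0" using a \<epsilon> \<Lambda> by (simp add: \<delta>_def)
  have "eventually (\<lambda>s. \<bar>P s\<bar> < \<delta> \<and> \<bar>R s\<bar> < \<delta> \<and> \<bar>H' s\<bar> < \<delta>) at_top"
    using tendstoD[OF P_lim \<delta>] tendstoD[OF R_lim \<delta>] tendstoD[OF H'_lim \<delta>]
    by eventually_elim (simp add: dist_real_def)
  then obtain S where S: "\<And>s. s \<ge> S \<Longrightarrow> \<bar>P s\<bar> < \<delta> \<and> \<bar>R s\<bar> < \<delta> \<and> \<bar>H' s\<bar> < \<delta>"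
    by (auto simp: eventually_at_top_linorder)
  have small: "\<bar>H s\<bar> < \<epsilon>" if s: "s \<ge> max S T" for s
  proof -
    obtain z where z: "s < z" "z < s + 1" and P_diff: "P (s+1) - P s = a * H z + R z"
      using MVT2[of s "s+1" P "\<lambda>s. a * H s + R s"] s P_deriv by auto
    have "\<bar>P s\<bar> < \<delta>" "\<bar>P (s+1)\<bar> < \<delta>" "\<bar>R z\<bar> < \<delta>"
      using S[of s] S[of "s+1"] S[of z] s z by auto
    with P_diff have aHz: "\<bar>a * H z\<bar> \<le> 3 * \<delta>" by linarith
    have "\<bar>H z - H s\<bar> \<le> \<delta> * \<bar>z - s\<bar>"
    proof (rule DERIV_abs_diff_le[of s z H H' \<delta>])
      fix x assume "x \<in> {s..z}"
      then show "(H has_real_derivative H' x) (at x)" and "\<bar>H' x\<bar> \<le> \<delta>"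
        using H_deriv[of x] S[of x] s by auto
    qed (use z in auto)
    also have "\<dots> \<le> \<delta> * 1" using z \<delta> by (intro mult_left_mono) auto
    finally have "\<bar>H z - H s\<bar> \<le> \<delta>" by simp
    then have "\<bar>a\<bar> * \<bar>H s\<bar> \<le> \<bar>a\<bar> * (\<bar>H z\<bar> + \<delta>)" by (intro mult_left_mono) auto
    also have "\<dots> \<le> \<Lambda> * \<delta>" using aHz by (simp add: \<Lambda>_def abs_mult algebra_simps)
    also have "\<dots> = \<bar>a\<bar> * \<epsilon> / 2" using \<Lambda> by (simp add: \<delta>_def)
    also have "\<dots> < \<bar>a\<bar> * \<epsilon>" using a \<epsilon> by simp
    finally show ?thesis using a by simp
  qed
  show "eventually (\<lambda>s. dist (H s) 0 < \<epsilon>) at_top"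
    using eventually_ge_at_top[of "max S T"] by eventually_elim (simp add: small dist_real_def)
qed

lemma DERIV_powr_fun:
  fixes \<phi> \<phi>' :: "real \<Rightarrow> real"
  assumes pos: "\<And>t. \<phi> t > 0" and deriv: "\<And>t. (\<phi> has_real_derivative \<phi>' t) (at t)"
  shows "((\<lambda>t. \<phi> t powr m) has_real_derivative m * \<phi> t powr m * \<phi>' t / \<phi> t) (at t)"
proof -
  have "((\<lambda>t. \<phi> t powr m) has_real_derivative m * \<phi> t powr (m - of_nat 1) * \<phi>' t) (at t)"
    by (rule DERIV_fun_powr[OF deriv pos])
  then show ?thesis
    using pos[of t] by (simp add: powr_diff)
qed

lemma DERIV_powr_fun_deriv:
  fixes \<phi> \<phi>' \<phi>'' :: "real \<Rightarrow> real"
  assumes pos: "\<And>t. \<phi> t > 0" and deriv: "\<And>t. (\<phi> has_real_derivative \<phi>' t) (at t)"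
    and deriv': "\<And>t. (\<phi>' has_real_derivative \<phi>'' t) (at t)"
  shows "((\<lambda>t. m * \<phi> t powr m * \<phi>' t / \<phi> t) has_real_derivative
           m * \<phi> t powr m * ((m - 1) * (\<phi>' t)\<^sup>2 + \<phi> t * \<phi>'' t) / (\<phi> t)\<^sup>2) (at t)"
proof -
  have "((\<lambda>t. m * \<phi> t powr m * \<phi>' t) has_real_derivative
      m * (m * \<phi> t powr m * \<phi>' t / \<phi> t) * \<phi>' t + \<phi>'' t * (m * \<phi> t powr m)) (at t)"
    by (rule DERIV_mult[OF DERIV_cmult[OF DERIV_powr_fun[OF pos deriv]] deriv'])
  from DERIV_divide[OF this deriv] pos[of t]
  have "((\<lambda>t. m * \<phi> t powr m * \<phi>' t / \<phi> t) has_real_derivative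
      ((m * (m * \<phi> t powr m * \<phi>' t / \<phi> t) * \<phi>' t + \<phi>'' t * (m * \<phi> t powr m)) * \<phi> t
        - m * \<phi> t powr m * \<phi>' t * \<phi>' t) / (\<phi> t * \<phi> t)) (at t)"
    by simp
  then show ?thesis
    by (rule DERIV_cong) (use pos[of t] in \<open>simp add: field_simps power2_eq_square\<close>)
qed

lemma tendsto_compose_exp_at_bot:
  fixes f f' :: "real \<Rightarrow> real"
  assumes "\<And>t. (f has_real_derivative f' t) (at t)"
  shows "((\<lambda>s. f (exp s)) \<longlongrightarrow> f 0) at_bot"
  using isCont_tendsto_compose[OF DERIV_isCont[OF assms] exp_at_bot] .

section \<open>Radial functions on \<open>real^'n\<close>\<close>

lemma partial_eqI:
  assumes "((\<lambda>h. f (x + h *\<^sub>R axis i 1)) has_real_derivative D) (at 0)"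
  shows "partial i f x = D"
  using assms unfolding partial_def by (rule DERIV_imp_deriv)

lemma DERIV_along_axis:
  assumes "partials_exist f"
  shows "((\<lambda>t. f (t *\<^sub>R axis i 1)) has_real_derivative partial i f (t *\<^sub>R axis i 1)) (at t)"
proof -
  have "((\<lambda>h. f (t *\<^sub>R axis i 1 + h *\<^sub>R axis i 1)) has_real_derivative partial i f (t *\<^sub>R axis i 1)) (at 0)"
    using assms unfolding partial_def partials_exist_def by (simp add: DERIV_deriv_iff_real_differentiable)
  then have "((\<lambda>h. f ((h + t) *\<^sub>R axis i 1)) has_real_derivative partial i f (t *\<^sub>R axis i 1)) (at 0)"
    by (simp add: scaleR_add_left add.commute)
  then show ?thesis using DERIV_shift[of "\<lambda>t. f (t *\<^sub>R axis i 1)" _ 0 t] by simp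
qed

lemma radial_eq_axis:
  assumes "\<forall>x y. norm x = norm y \<longrightarrow> f x = f y"
  shows "f y = f (norm y *\<^sub>R axis i (1::real))"
  using assms by (metis norm_axis_1 norm_scaleR real_norm_def abs_norm_cancel mult.right_neutral)

lemma norm_axis_add_axis:
  assumes "j \<noteq> i"
  shows "norm (t *\<^sub>R axis i (1::real) + s *\<^sub>R axis j 1 :: real^'n) = sqrt (t\<^sup>2 + s\<^sup>2)"
  using assms by (simp add: norm_eq_sqrt_inner inner_add_left inner_add_right inner_axis_axis power2_eq_square)

lemma laplacian_radial:
  fixes g :: "real^'n \<Rightarrow> real"
  assumes radial: "\<forall>x y. norm x = norm y \<longrightarrow> g x = g y"
    and g_deriv: "\<And>t. ((\<lambda>t. g (t *\<^sub>R axis i 1)) has_real_derivative g' t) (at t)"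
    and g'_deriv: "\<And>t. (g' has_real_derivative g'' t) (at t)"
    and t: "t > 0"
  shows "laplacian g (t *\<^sub>R axis i 1) = g'' t + (real CARD('n) - 1) * g' t / t"
proof -
  define \<psi> where "\<psi> = (\<lambda>t. g (t *\<^sub>R axis i 1))"
  have g_eq: "g y = \<psi> (norm y)" for y
    unfolding \<psi>_def by (rule radial_eq_axis[OF radial])
  have shift: "((\<lambda>h. f (h + s)) has_real_derivative f' s) (at 0)"
    if "(f has_real_derivative f' s) (at s)" for f f' s
    using that DERIV_shift[of f "f' s" 0 s] by simp
  have g_i: "partial i g (s *\<^sub>R axis i 1) = g' s" for s
  proof (rule partial_eqI)
    have "((\<lambda>h. \<psi> (h + s)) has_real_derivative g' s) (at 0)"
      using shift[of \<psi> g' s] g_deriv unfolding \<psi>_def by simp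
    then show "((\<lambda>h. g (s *\<^sub>R axis i 1 + h *\<^sub>R axis i 1)) has_real_derivative g' s) (at 0)"
      by (simp add: \<psi>_def scaleR_add_left add.commute)
  qed
  have g_ii: "partial i (partial i g) (t *\<^sub>R axis i 1) = g'' t"
    by (rule partial_eqI) (use shift[of g' g'' t] g'_deriv in \<open>simp add: g_i scaleR_add_left[symmetric] add.commute\<close>)
  define R where "R = (\<lambda>s::real. sqrt (t\<^sup>2 + s\<^sup>2))"
  have R_pos: "R s > 0" for s unfolding R_def using t by (simp add: add_pos_nonneg)
  have R_deriv: "(R has_real_derivative s / R s) (at s)" for s
    unfolding R_def using t
    by (auto intro!: derivative_eq_intros simp: add_pos_nonneg field_simps)
      (smt (verit) zero_le_power2 power2_eq_square mult_pos_pos)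
  have g_j: "partial j g (t *\<^sub>R axis i 1 + s *\<^sub>R axis j 1) = g' (R s) * (s / R s)" if "j \<noteq> i" for j s
  proof (rule partial_eqI)
    have "g (t *\<^sub>R axis i 1 + s *\<^sub>R axis j 1 + h *\<^sub>R axis j 1) = \<psi> (R (h + s))" for h
    proof -
      have "t *\<^sub>R axis i 1 + s *\<^sub>R axis j 1 + h *\<^sub>R axis j 1 = t *\<^sub>R axis i 1 + (h + s) *\<^sub>R axis j (1::real)"
        by (simp add: scaleR_add_left algebra_simps)
      then show ?thesis using norm_axis_add_axis[OF that, of t "h + s"] g_eq by (simp only: R_def)
    qed
    moreover have "((\<lambda>x. \<psi> (R x)) has_real_derivative g' (R s) * (s / R s)) (at s)"
      using DERIV_chain2[OF g_deriv R_deriv] unfolding \<psi>_def .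
    ultimately show "((\<lambda>h. g (t *\<^sub>R axis i 1 + s *\<^sub>R axis j 1 + h *\<^sub>R axis j 1))
        has_real_derivative g' (R s) * (s / R s)) (at 0)"
      using shift[of "\<lambda>x. \<psi> (R x)"] by simp
  qed
  have g_jj: "partial j (partial j g) (t *\<^sub>R axis i 1) = g' t / t" if "j \<noteq> i" for j
  proof (rule partial_eqI)
    have "R 0 = t" unfolding R_def using t by simp
    moreover have "((\<lambda>h. g' (R h) * (h / R h)) has_real_derivative
        g'' (R 0) * (0 / R 0) * (0 / R 0) + (1 * R 0 - 0 * (0 / R 0)) / (R 0 * R 0) * g' (R 0)) (at 0)"
      using R_pos[of 0]
      by (intro DERIV_mult DERIV_chain2[OF g'_deriv R_deriv] DERIV_divide[OF DERIV_ident R_deriv]) auto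
    ultimately show "((\<lambda>h. partial j g (t *\<^sub>R axis i 1 + h *\<^sub>R axis j 1)) has_real_derivative g' t / t) (at 0)"
      using t by (simp add: g_j[OF that])
  qed
  have "laplacian g (t *\<^sub>R axis i 1)
      = partial i (partial i g) (t *\<^sub>R axis i 1) + (\<Sum>j\<in>UNIV - {i}. partial j (partial j g) (t *\<^sub>R axis i 1))"
    unfolding laplacian_def by (simp add: sum.remove[of UNIV i])
  also have "\<dots> = g'' t + (\<Sum>j\<in>UNIV - {i}. g' t / t)"
    by (simp add: g_ii g_jj)
  also have "\<dots> = g'' t + (real CARD('n) - 1) * g' t / t"
    by (simp add: card_Diff_singleton of_nat_diff)
  finally show ?thesis .
qed

lemma radial_deriv_axis:
  "radial_deriv f (t *\<^sub>R axis i 1) = t * partial i f (t *\<^sub>R axis i 1)"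
proof -
  have "(t *\<^sub>R axis i 1) $ j * partial j f (t *\<^sub>R axis i 1) = (if i = j then t * partial i f (t *\<^sub>R axis i 1) else 0)" for j
    by (simp add: axis_def)
  then show ?thesis unfolding radial_deriv_def by (simp only: sum.delta) simp
qed

section \<open>The profile equation in Emden-Fowler variables\<close>

locale yamabe_profile_ode =
  fixes N m \<rho> \<beta> \<alpha> :: real and \<phi> \<phi>' M' M'' :: "real \<Rightarrow> real"
  assumes N_ge_3: "N \<ge> 3"
    and m_def: "m = (N - 2) / (N + 2)"
    and rho_pos: "\<rho> > 0"
    and beta_pos: "\<beta> > 0"
    and alpha_def: "\<alpha> = (2 * \<beta> + \<rho>) / (1 - m)"
    and phi_pos: "\<And>t. \<phi> t > 0"
    and phi_deriv: "\<And>t. (\<phi> has_real_derivative \<phi>' t) (at t)"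
    and powr_deriv: "\<And>t. ((\<lambda>t. \<phi> t powr m) has_real_derivative M' t) (at t)"
    and M'_deriv: "\<And>t. (M' has_real_derivative M'' t) (at t)"
    and ode: "\<And>t. t > 0 \<Longrightarrow>
      (N - 1) / m * (M'' t + (N - 1) * M' t / t) + \<alpha> * \<phi> t + \<beta> * (t * \<phi>' t) = 0"
begin

definition "k = (N - 2) / 2"
definition "c1 = (N - 1) / m"
definition "c2 = (N + 2) / 4"
definition "A = (N - 1) * (N - 2)"

lemma m_pos: "m > 0" and m_lt_1: "m < 1"
  using N_ge_3 by (simp_all add: m_def)

lemma k_pos: "k > 0" and c1_pos: "c1 > 0" and c2_pos: "c2 > 0" and A_pos: "A > 0"
  using N_ge_3 m_pos by (simp_all add: k_def c1_def c2_def A_def)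

lemma k_eq: "k = 2 * m / (1 - m)"
  using N_ge_3 by (simp add: k_def m_def field_simps)

lemma c1_k: "c1 * k\<^sup>2 = c2 * A"
  unfolding c1_def k_def c2_def A_def using N_ge_3 by (simp add: m_def field_simps power2_eq_square)

lemma alpha_eq: "\<alpha> = c2 * \<rho> + \<beta> * k / m"
  using N_ge_3 by (simp add: alpha_def c2_def k_def m_def field_simps)

definition "M t = \<phi> t powr m"

lemma M_pos: "M t > 0"
  using phi_pos[of t] by (simp add: M_def)

lemma M_deriv: "(M has_real_derivative M' t) (at t)"
  using powr_deriv by (simp add: M_def[abs_def])

lemma M'_eq: "M' t = m * M t * \<phi>' t / \<phi> t"
  using DERIV_unique[OF powr_deriv DERIV_powr_fun[OF phi_pos phi_deriv]] by (simp add: M_def)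

definition "Q s = exp (k * s) * M (exp s)"
definition "dQ s = exp (k * s) * (k * M (exp s) + exp s * M' (exp s))"
definition "u s = (exp s)\<^sup>2 * \<phi> (exp s) / M (exp s)"
definition "H s = Q s * (A - \<rho> * u s)"
definition "energy s = c1 / 2 * (dQ s)\<^sup>2 - c2 * (Q s)\<^sup>2 * (A / 2 - \<rho> * m / (1 + m) * u s)"

lemma Q_pos: "Q s > 0"
  using M_pos by (simp add: Q_def)

lemma u_pos: "u s > 0"
  using M_pos[of "exp s"] phi_pos[of "exp s"] by (simp add: u_def)

lemma u_eq_Q_powr: "u s = Q s powr ((1 - m) / m)"
proof -
  have "Q s powr ((1 - m) / m) = exp (k * s * ((1 - m) / m)) * \<phi> (exp s) powr (m * ((1 - m) / m))"
    using phi_pos by (simp add: Q_def M_def powr_mult exp_powr_real powr_powr)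
  also have "k * s * ((1 - m) / m) = 2 * s"
    using m_pos m_lt_1 by (simp add: k_eq)
  also have "m * ((1 - m) / m) = 1 - m"
    using m_pos by simp
  finally show ?thesis
    using phi_pos[of "exp s"] by (simp add: u_def M_def powr_diff exp_double)
qed

lemma Q_deriv: "(Q has_real_derivative dQ s) (at s)"
proof -
  have "(Q has_real_derivative exp (k * s) * k * M (exp s) + M' (exp s) * exp s * exp (k * s)) (at s)"
    unfolding Q_def[abs_def]
    by (rule DERIV_mult[OF _ DERIV_chain2[OF M_deriv DERIV_exp]]) (auto intro!: derivative_eq_intros)
  then show ?thesis by (simp add: dQ_def algebra_simps)
qed

text \<open>The radial equation, rewritten in the variable \<open>s = ln r\<close>.\<close>

lemma dQ_deriv: "(dQ has_real_derivative (c2 * H s - \<beta> / m * u s * dQ s) / c1) (at s)"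
proof -
  define r where "r = exp s"
  have r: "r > 0" by (simp add: r_def)
  have "((\<lambda>s. k * M (exp s) + exp s * M' (exp s)) has_real_derivative
      k * (M' r * r) + (r * M' r + M'' r * r * r)) (at s)"
    unfolding r_def
    by (intro DERIV_add DERIV_cmult DERIV_chain2[OF M_deriv DERIV_exp]
        DERIV_mult[OF DERIV_exp DERIV_chain2[OF M'_deriv DERIV_exp], THEN DERIV_cong]) simp
  then have "(dQ has_real_derivative exp (k * s) * k * (k * M r + r * M' r)
      + (k * (M' r * r) + (r * M' r + M'' r * r * r)) * exp (k * s)) (at s)"
    unfolding dQ_def[abs_def] r_def by (rule DERIV_mult[rotated]) (auto intro!: derivative_eq_intros)
  moreover have "exp (k * s) * k * (k * M r + r * M' r) + (k * (M' r * r) + (r * M' r + M'' r * r * r)) * exp (k * s)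
      = (c2 * H s - \<beta> / m * u s * dQ s) / c1"
  proof -
    define e where "e = exp (k * s)"
    have "c1 * (r\<^sup>2 * M'' r) + c1 * (N - 1) * r * M' r + r\<^sup>2 * (\<alpha> * \<phi> r + \<beta> * r * \<phi>' r)
        = r\<^sup>2 * (c1 * (M'' r + (N - 1) * M' r / r) + \<alpha> * \<phi> r + \<beta> * (r * \<phi>' r))"
      using r by (simp add: field_simps power2_eq_square)
    also have "\<dots> = 0"
      using ode[OF r] by (simp add: c1_def)
    finally have ode_r: "c1 * (r\<^sup>2 * M'' r) = - c1 * (N - 1) * r * M' r - r\<^sup>2 * (\<alpha> * \<phi> r + \<beta> * r * \<phi>' r)"
      by linarith
    have "c1 * (e * k * (k * M r + r * M' r) + (k * (M' r * r) + (r * M' r + M'' r * r * r)) * e)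
        = e * (c1 * k\<^sup>2 * M r + c1 * (2 * k + 1) * r * M' r + c1 * (r\<^sup>2 * M'' r))"
      by (simp add: algebra_simps power2_eq_square)
    also have "\<dots> = e * (c2 * A * M r - r\<^sup>2 * (\<alpha> * \<phi> r + \<beta> * r * \<phi>' r))"
      unfolding ode_r c1_k by (simp add: k_def field_simps)
    also have "\<dots> = c2 * H s - \<beta> / m * u s * dQ s"
      using M_pos[of r] phi_pos[of r] m_pos
      unfolding alpha_eq H_def Q_def u_def dQ_def M'_eq e_def r_def[symmetric]
      by (simp add: field_simps power2_eq_square)
    finally show ?thesis
      using c1_pos by (simp add: e_def field_simps)
  qed
  ultimately show ?thesis by simp
qed

lemma u_deriv: "(u has_real_derivative (1 - m) / m * u s * dQ s / Q s) (at s)"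
proof -
  define r where "r = exp s"
  have "(u has_real_derivative
      ((2 * r * r * \<phi> r + \<phi>' r * r * r\<^sup>2) * M r - r\<^sup>2 * \<phi> r * (M' r * r)) / (M r * M r)) (at s)"
    unfolding u_def[abs_def] r_def using M_pos[of "exp s"]
    by (intro DERIV_divide DERIV_mult DERIV_chain2[OF phi_deriv DERIV_exp] DERIV_chain2[OF M_deriv DERIV_exp])
      (auto intro!: derivative_eq_intros simp: power2_eq_square)
  moreover have "((2 * r * r * \<phi> r + \<phi>' r * r * r\<^sup>2) * M r - r\<^sup>2 * \<phi> r * (M' r * r)) / (M r * M r)
      = (1 - m) / m * u s * dQ s / Q s"
    using M_pos[of r] phi_pos[of r] m_pos m_lt_1
    unfolding u_def Q_def dQ_def M'_eq k_eq r_def[symmetric]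
    by (simp add: field_simps power2_eq_square)
  ultimately show ?thesis by simp
qed

lemma H_deriv: "(H has_real_derivative dQ s * (A - \<rho> * u s / m)) (at s)"
proof -
  have "(H has_real_derivative dQ s * (A - \<rho> * u s) + (0 - \<rho> * ((1 - m) / m * u s * dQ s / Q s)) * Q s) (at s)"
    unfolding H_def[abs_def] by (intro DERIV_mult Q_deriv DERIV_diff DERIV_const DERIV_cmult u_deriv)
  then show ?thesis
    using Q_pos[of s] m_pos by (simp add: field_simps)
qed

lemma energy_deriv: "(energy has_real_derivative - (\<beta> / m) * u s * (dQ s)\<^sup>2) (at s)"
proof -
  have "(energy has_real_derivative
      c1 / 2 * (2 * dQ s * ((c2 * H s - \<beta> / m * u s * dQ s) / c1))
      - (c2 * (2 * Q s * dQ s) * (A / 2 - \<rho> * m / (1 + m) * u s)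
         + (0 - \<rho> * m / (1 + m) * ((1 - m) / m * u s * dQ s / Q s)) * (c2 * (Q s)\<^sup>2))) (at s)"
    unfolding energy_def[abs_def]
    by (intro DERIV_diff DERIV_cmult DERIV_mult DERIV_const u_deriv
        DERIV_power[OF dQ_deriv, of 2, THEN DERIV_cong] DERIV_power[OF Q_deriv, of 2, THEN DERIV_cong]) simp_all
  moreover have "c1 / 2 * (2 * dQ s * ((c2 * H s - \<beta> / m * u s * dQ s) / c1))
      - (c2 * (2 * Q s * dQ s) * (A / 2 - \<rho> * m / (1 + m) * u s)
         + (0 - \<rho> * m / (1 + m) * ((1 - m) / m * u s * dQ s / Q s)) * (c2 * (Q s)\<^sup>2))
      = - (\<beta> / m) * u s * (dQ s)\<^sup>2"
  proof -
    define w where "w = \<rho> * m / (1 + m)"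
    have first_term: "c1 / 2 * (2 * dQ s * ((c2 * H s - \<beta> / m * u s * dQ s) / c1))
        = c2 * dQ s * Q s * (A - \<rho> * u s) - \<beta> / m * u s * (dQ s)\<^sup>2"
      using c1_pos by (simp add: H_def field_simps power2_eq_square)
    have "w * ((1 - m) / m) = \<rho> * (1 - m) / (1 + m)"
      using m_pos by (simp add: w_def)
    also have "\<dots> = \<rho> - 2 * w"
      using m_pos by (simp add: w_def field_simps less_imp_neq[symmetric])
    finally have w_eq: "w * ((1 - m) / m) = \<rho> - 2 * w" .
    have "(0 - w * ((1 - m) / m * u s * dQ s / Q s)) * (c2 * (Q s)\<^sup>2)
        = - c2 * (w * ((1 - m) / m)) * u s * dQ s * Q s"
      using Q_pos[of s] m_pos by (simp add: field_simps power2_eq_square)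
    also have "\<dots> = - c2 * (\<rho> - 2 * w) * u s * dQ s * Q s"
      by (simp only: w_eq)
    finally have "(0 - w * ((1 - m) / m * u s * dQ s / Q s)) * (c2 * (Q s)\<^sup>2)
        = - c2 * (\<rho> - 2 * w) * u s * dQ s * Q s" .
    with first_term show ?thesis
      unfolding w_def[symmetric] by (simp add: algebra_simps power2_eq_square)
  qed
  ultimately show ?thesis by simp
qed

lemma exp_k_at_bot: "((\<lambda>s. exp (k * s)) \<longlongrightarrow> 0) at_bot"
  using k_pos
  by (intro filterlim_compose[OF exp_at_bot] filterlim_tendsto_pos_mult_at_bot[OF tendsto_const]
      filterlim_ident)

lemma dQ_factor_at_bot: "((\<lambda>s. k * M (exp s) + exp s * M' (exp s)) \<longlongrightarrow> k * M 0) at_bot"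
  using tendsto_add[OF tendsto_mult[OF tendsto_const tendsto_compose_exp_at_bot[OF M_deriv]]
      tendsto_mult[OF exp_at_bot tendsto_compose_exp_at_bot[OF M'_deriv]], of k]
  by simp

lemma energy_at_bot: "(energy \<longlongrightarrow> 0) at_bot"
proof -
  have "(Q \<longlongrightarrow> 0) at_bot"
    using tendsto_mult[OF exp_k_at_bot tendsto_compose_exp_at_bot[OF M_deriv]] by (simp add: Q_def[abs_def])
  moreover have "(dQ \<longlongrightarrow> 0) at_bot"
    using tendsto_mult[OF exp_k_at_bot dQ_factor_at_bot] by (simp add: dQ_def[abs_def])
  moreover have "((\<lambda>s. (exp s)\<^sup>2 * \<phi> (exp s) / M (exp s)) \<longlongrightarrow> 0\<^sup>2 * \<phi> 0 / M 0) at_bot"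
    using M_pos[of 0]
    by (intro tendsto_intros exp_at_bot tendsto_compose_exp_at_bot[OF phi_deriv] tendsto_compose_exp_at_bot[OF M_deriv]) simp
  then have "(u \<longlongrightarrow> 0) at_bot"
    by (simp add: u_def[abs_def])
  ultimately have "(energy \<longlongrightarrow> c1 / 2 * 0\<^sup>2 - c2 * 0\<^sup>2 * (A / 2 - \<rho> * m / (1 + m) * 0)) at_bot"
    unfolding energy_def[abs_def] by (intro tendsto_intros)
  then show ?thesis by simp
qed

lemma energy_antimono: "antimono energy"
proof (rule antimonoI)
  fix s t :: real
  assume "s \<le> t"
  then show "energy t \<le> energy s"
  proof (rule DERIV_nonpos_imp_nonincreasing)
    fix x
    show "\<exists>y. (energy has_real_derivative y) (at x) \<and> y \<le> 0"
      using energy_deriv[of x] beta_pos m_pos u_pos[of x] by auto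
  qed
qed

lemma energy_nonpos: "energy s \<le> 0"
proof (rule ccontr)
  assume "\<not> energy s \<le> 0"
  then obtain t where "t \<le> s" "energy t < energy s"
    using order_tendstoD(2)[OF energy_at_bot, of "energy s"] eventually_at_bot_linorder[of "\<lambda>t. energy t < energy s"]
    by (metis linorder_not_le nle_le)
  then show False using antimonoD[OF energy_antimono] by fastforce
qed

lemma energy_neg: "\<exists>s. energy s < 0"
proof -
  obtain t where t: "\<And>s. s \<le> t \<Longrightarrow> k * M (exp s) + exp s * M' (exp s) > 0"
    using order_tendstoD(1)[OF dQ_factor_at_bot, of 0] k_pos M_pos[of 0]
    by (auto simp: eventually_at_bot_linorder)
  obtain z where z: "t - 1 < z" "z < t" and "energy t - energy (t - 1) = - (\<beta> / m) * u z * (dQ z)\<^sup>2"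
    using MVT2[of "t - 1" t energy "\<lambda>s. - (\<beta> / m) * u s * (dQ s)\<^sup>2"] energy_deriv by auto
  moreover have "dQ z > 0" using t[of z] z by (simp add: dQ_def)
  then have "(\<beta> / m) * u z * (dQ z)\<^sup>2 > 0" using beta_pos m_pos u_pos[of z] by simp
  ultimately have "energy t < energy (t - 1)" by simp
  then show ?thesis using energy_nonpos[of "t - 1"] by (intro exI[of _ t]) simp
qed

definition "u_max = A * (1 + m) / (2 * \<rho> * m)"

lemma energy_ge: "energy s \<ge> - (c2 * (Q s)\<^sup>2 * (A / 2))"
proof -
  have "c2 * (Q s)\<^sup>2 * (A / 2 - \<rho> * m / (1 + m) * u s) \<le> c2 * (Q s)\<^sup>2 * (A / 2)"
    using c2_pos rho_pos m_pos u_pos[of s] by (intro mult_left_mono) auto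
  moreover have "0 \<le> c1 / 2 * (dQ s)\<^sup>2" using c1_pos by simp
  ultimately show ?thesis unfolding energy_def by linarith
qed

lemma u_le_u_max: "u s \<le> u_max"
proof -
  have "0 \<le> c1 / 2 * (dQ s)\<^sup>2" using c1_pos by simp
  then have "0 \<le> c2 * (Q s)\<^sup>2 * (A / 2 - \<rho> * m / (1 + m) * u s)"
    using energy_nonpos[of s] unfolding energy_def by linarith
  moreover have "0 < c2 * (Q s)\<^sup>2" using c2_pos Q_pos[of s] by simp
  ultimately have "u s * (\<rho> * m / (1 + m)) \<le> A / 2"
    by (simp add: zero_le_mult_iff mult.commute)
  moreover have "\<rho> * m / (1 + m) > 0"
    using rho_pos m_pos by simp
  ultimately have "u s \<le> (A / 2) / (\<rho> * m / (1 + m))"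
    by (metis pos_le_divide_eq)
  also have "\<dots> = u_max"
    by (simp add: u_max_def)
  finally show ?thesis .
qed

lemma dQ_sq_le: "c1 * (dQ s)\<^sup>2 \<le> c2 * A * (Q s)\<^sup>2"
proof -
  have "c1 / 2 * (dQ s)\<^sup>2 \<le> c2 * (Q s)\<^sup>2 * (A / 2 - \<rho> * m / (1 + m) * u s)"
    using energy_nonpos[of s] by (simp add: energy_def)
  also have "\<dots> \<le> c2 * (Q s)\<^sup>2 * (A / 2)"
    using c2_pos rho_pos m_pos u_pos[of s] by (intro mult_left_mono) auto
  finally show ?thesis by (simp add: algebra_simps)
qed

lemma orbit_bounded:
  obtains B where "\<And>s. Q s \<le> B" and "\<And>s. u s \<le> B" and "\<And>s. \<bar>dQ s\<bar> \<le> B"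
proof -
  define Q_max where "Q_max = u_max powr (m / (1 - m))"
  define dQ_max where "dQ_max = sqrt (c2 * A / c1) * Q_max"
  have Q_le: "Q s \<le> Q_max" for s
  proof -
    have "Q s = u s powr (m / (1 - m))"
      using Q_pos[of s] m_pos m_lt_1 by (simp add: u_eq_Q_powr powr_powr)
    also have "\<dots> \<le> Q_max"
      unfolding Q_max_def using u_le_u_max u_pos[of s] m_pos m_lt_1 by (intro powr_mono2) auto
    finally show ?thesis .
  qed
  have "\<bar>dQ s\<bar> \<le> dQ_max" for s
  proof -
    have "(dQ s)\<^sup>2 \<le> c2 * A / c1 * (Q s)\<^sup>2"
      using dQ_sq_le[of s] c1_pos by (simp add: field_simps)
    then have "\<bar>dQ s\<bar> \<le> sqrt (c2 * A / c1 * (Q s)\<^sup>2)"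
      by (simp add: real_le_rsqrt)
    also have "\<dots> = sqrt (c2 * A / c1) * Q s"
      unfolding real_sqrt_mult real_sqrt_abs using Q_pos[of s] by simp
    also have "\<dots> \<le> dQ_max"
      unfolding dQ_max_def using Q_le[of s] c1_pos c2_pos A_pos by (intro mult_left_mono) auto
    finally show ?thesis .
  qed
  then show ?thesis
    using Q_le u_le_u_max by (intro that[of "max Q_max (max u_max dQ_max)"]) (auto simp: le_max_iff_disj)
qed

lemma dQ_deriv_bounded:
  obtains K where "\<And>s. \<bar>(c2 * H s - \<beta> / m * u s * dQ s) / c1\<bar> \<le> K"
proof -
  obtain B where Q_le: "\<And>s. Q s \<le> B" and u_le: "\<And>s. u s \<le> B" and dQ_le: "\<And>s. \<bar>dQ s\<bar> \<le> B"
    using orbit_bounded by metis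
  define K where "K = c2 * (B * (A + \<rho> * B)) + \<beta> / m * B * B"
  have bound: "\<bar>c2 * H s - \<beta> / m * u s * dQ s\<bar> \<le> K" for s
  proof -
    have "\<rho> * u s \<le> \<rho> * B" and "0 < \<rho> * u s"
      using u_le[of s] u_pos[of s] rho_pos by auto
    then have "\<bar>A - \<rho> * u s\<bar> \<le> A + \<rho> * B"
      using A_pos by (simp add: abs_le_iff)
    then have "\<bar>H s\<bar> \<le> B * (A + \<rho> * B)"
      unfolding H_def abs_mult using Q_le[of s] Q_pos[of s] by (intro mult_mono) auto
    moreover have "\<bar>\<beta> / m * u s * dQ s\<bar> \<le> \<beta> / m * B * B"
      unfolding abs_mult using u_le[of s] u_pos[of s] dQ_le[of s] beta_pos m_pos
      by (intro mult_mono) auto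
    moreover have "\<bar>c2 * H s\<bar> \<le> c2 * (B * (A + \<rho> * B))"
      using \<open>\<bar>H s\<bar> \<le> B * (A + \<rho> * B)\<close> c2_pos by (simp add: abs_mult)
    ultimately show ?thesis
      using abs_triangle_ineq4[of "c2 * H s" "\<beta> / m * u s * dQ s"] unfolding K_def by linarith
  qed
  show ?thesis
  proof (rule that)
    fix s
    have "\<bar>(c2 * H s - \<beta> / m * u s * dQ s) / c1\<bar> = \<bar>c2 * H s - \<beta> / m * u s * dQ s\<bar> / c1"
      using c1_pos by (simp add: abs_divide)
    also have "\<dots> \<le> K / c1"
      using bound[of s] c1_pos by (simp add: divide_right_mono)
    finally show "\<bar>(c2 * H s - \<beta> / m * u s * dQ s) / c1\<bar> \<le> K / c1" .
  qed
qed

lemma Q_eventually_ge: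
  obtains q s1 where "q > 0" and "\<And>s. s \<ge> s1 \<Longrightarrow> q \<le> Q s"
proof -
  obtain s1 where s1: "energy s1 < 0" using energy_neg by blast
  define q where "q = sqrt (- energy s1 / (c2 * (A / 2)))"
  have "q \<le> Q s" if "s \<ge> s1" for s
  proof -
    have "- energy s1 \<le> (Q s)\<^sup>2 * (c2 * (A / 2))"
      using energy_ge[of s] antimonoD[OF energy_antimono that] by (simp add: mult_ac)
    moreover have "c2 * (A / 2) > 0" using c2_pos A_pos by simp
    ultimately have "- energy s1 / (c2 * (A / 2)) \<le> (Q s)\<^sup>2"
      by (metis pos_divide_le_eq)
    then show ?thesis
      unfolding q_def using real_sqrt_le_mono Q_pos[of s] by fastforce
  qed
  moreover have "q > 0" using s1 c2_pos A_pos by (simp add: q_def divide_neg_pos)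
  ultimately show ?thesis using that by blast
qed

lemma u_eventually_ge:
  obtains c s1 where "c > 0" and "\<And>s. s \<ge> s1 \<Longrightarrow> c \<le> u s"
proof -
  obtain q s1 where q: "q > 0" and Q_ge: "\<And>s. s \<ge> s1 \<Longrightarrow> q \<le> Q s"
    using Q_eventually_ge by blast
  have "q powr ((1 - m) / m) \<le> u s" if "s \<ge> s1" for s
    unfolding u_eq_Q_powr using Q_ge[OF that] q m_pos m_lt_1 by (intro powr_mono2) auto
  with q show ?thesis using that[of "q powr ((1 - m) / m)" s1] by simp
qed

lemma energy_tendsto_Inf: "(energy \<longlongrightarrow> Inf (range energy)) at_top"
proof -
  obtain B where Q_le: "\<And>s. Q s \<le> B"
    using orbit_bounded by metis
  show ?thesis
  proof (rule antimono_bdd_below_tendsto[OF energy_antimono])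
    fix s
    have "(Q s)\<^sup>2 \<le> B\<^sup>2"
      using Q_le[of s] Q_pos[of s] by (intro power_mono) auto
    then have "c2 * (Q s)\<^sup>2 * (A / 2) \<le> c2 * B\<^sup>2 * (A / 2)"
      using c2_pos A_pos by (intro mult_right_mono mult_left_mono) auto
    then show "- (c2 * B\<^sup>2 * (A / 2)) \<le> energy s"
      using energy_ge[of s] by linarith
  qed
qed

lemma dQ_tendsto_0: "(dQ \<longlongrightarrow> 0) at_top"
proof -
  obtain c s1 where c: "c > 0" and u_ge: "\<And>s. s \<ge> s1 \<Longrightarrow> c \<le> u s"
    using u_eventually_ge by blast
  obtain K where K: "\<And>s. \<bar>(c2 * H s - \<beta> / m * u s * dQ s) / c1\<bar> \<le> K"
    using dQ_deriv_bounded by blast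
  show ?thesis
  proof (rule tendsto_zero_if_dissipative[OF energy_tendsto_Inf _ energy_deriv _ dQ_deriv K])
    show "\<beta> / m * c > 0" using beta_pos m_pos c by simp
    fix s assume "s \<ge> s1"
    then have "\<beta> / m * c * (dQ s)\<^sup>2 \<le> \<beta> / m * u s * (dQ s)\<^sup>2"
      using u_ge beta_pos m_pos by (intro mult_right_mono mult_left_mono) auto
    then show "- (\<beta> / m) * u s * (dQ s)\<^sup>2 \<le> - (\<beta> / m * c) * (dQ s)\<^sup>2"
      by simp
  qed
qed

lemma H_tendsto_0: "(H \<longlongrightarrow> 0) at_top"
proof -
  obtain B where u_le: "\<And>s. u s \<le> B"
    using orbit_bounded by metis
  have u_abs_le: "\<bar>u s\<bar> \<le> B" for s
    using u_le[of s] u_pos[of s] by simp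
  have dQ_deriv': "(dQ has_real_derivative c2 / c1 * H s + (- \<beta> / (m * c1) * u s) * dQ s) (at s)" for s
    using dQ_deriv[of s] c1_pos m_pos by (simp add: field_simps)
  have H_deriv': "(H has_real_derivative (A - \<rho> * u s / m) * dQ s) (at s)" for s
    using H_deriv[of s] by (simp add: mult.commute)
  have R_lim: "((\<lambda>s. (- \<beta> / (m * c1) * u s) * dQ s) \<longlongrightarrow> 0) at_top"
  proof (intro tendsto_zero_mult_bounded[OF dQ_tendsto_0, where B = "\<beta> / (m * c1) * B"] always_eventually allI)
    fix s
    have "\<beta> / (m * c1) * \<bar>u s\<bar> \<le> \<beta> / (m * c1) * B"
      using u_abs_le[of s] beta_pos m_pos c1_pos by (intro mult_left_mono) auto
    then show "\<bar>- \<beta> / (m * c1) * u s\<bar> \<le> \<beta> / (m * c1) * B"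
      using beta_pos m_pos c1_pos by (simp add: abs_mult)
  qed
  have H'_lim: "((\<lambda>s. (A - \<rho> * u s / m) * dQ s) \<longlongrightarrow> 0) at_top"
  proof (intro tendsto_zero_mult_bounded[OF dQ_tendsto_0, where B = "A + \<rho> * B / m"] always_eventually allI)
    fix s
    have "\<rho> * u s / m \<le> \<rho> * B / m" and "0 < \<rho> * u s / m"
      using u_le[of s] u_pos[of s] rho_pos m_pos by (auto simp: divide_right_mono)
    then show "\<bar>A - \<rho> * u s / m\<bar> \<le> A + \<rho> * B / m"
      using A_pos by (simp add: abs_le_iff)
  qed
  have "c2 / c1 \<noteq> 0" using c1_pos c2_pos by simp
  from tendsto_zero_if_derivative_tendsto[OF dQ_tendsto_0 R_lim H'_lim this dQ_deriv' H_deriv']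
  show ?thesis .
qed

lemma u_tendsto: "(u \<longlongrightarrow> A / \<rho>) at_top"
proof -
  obtain q s1 where q: "q > 0" and Q_ge: "\<And>s. s \<ge> s1 \<Longrightarrow> q \<le> Q s"
    using Q_eventually_ge by blast
  have "((\<lambda>s. 1 / (\<rho> * Q s) * H s) \<longlongrightarrow> 0) at_top"
  proof (rule tendsto_zero_mult_bounded[OF H_tendsto_0])
    show "eventually (\<lambda>s. \<bar>1 / (\<rho> * Q s)\<bar> \<le> 1 / (\<rho> * q)) at_top"
      using eventually_ge_at_top[of s1]
    proof eventually_elim
      case (elim s)
      have "\<rho> * q \<le> \<rho> * Q s" using Q_ge[OF elim] rho_pos by simp
      then have "1 / (\<rho> * Q s) \<le> 1 / (\<rho> * q)"
        using q rho_pos by (intro divide_left_mono) auto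
      then show ?case using Q_pos[of s] rho_pos by simp
    qed
  qed
  moreover have "1 / (\<rho> * Q s) * H s = A / \<rho> - u s" for s
    using Q_pos[of s] rho_pos by (simp add: H_def field_simps)
  ultimately have "((\<lambda>s. A / \<rho> - (A / \<rho> - u s)) \<longlongrightarrow> A / \<rho> - 0) at_top"
    by (intro tendsto_diff tendsto_const) simp
  then show ?thesis by simp
qed

lemma profile_tendsto: "((\<lambda>r. r\<^sup>2 * \<phi> r powr (1 - m)) \<longlongrightarrow> A / \<rho>) at_top"
proof -
  have "eventually (\<lambda>r. u (ln r) = r\<^sup>2 * \<phi> r powr (1 - m)) at_top"
    using eventually_gt_at_top[of 0]
    by eventually_elim (simp add: u_def M_def powr_diff phi_pos abs_of_pos)
  with filterlim_compose[OF u_tendsto ln_at_top] show ?thesis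
    by (rule tendsto_cong[THEN iffD1, rotated])
qed

end

section \<open>Radial solutions\<close>

lemma yamabe_profile_ode_along_axis:
  fixes v :: "real^'n \<Rightarrow> real" and i :: 'n and m \<rho> \<beta> \<alpha> :: real
  defines "\<phi> \<equiv> \<lambda>t. v (t *\<^sub>R axis i 1)"
    and "\<phi>' \<equiv> \<lambda>t. partial i v (t *\<^sub>R axis i 1)"
    and "\<phi>'' \<equiv> \<lambda>t. partial i (partial i v) (t *\<^sub>R axis i 1)"
  assumes n3: "CARD('n) \<ge> 3"
    and m_def: "m = (real CARD('n) - 2) / (real CARD('n) + 2)"
    and rho_pos: "\<rho> > 0" and beta_pos: "\<beta> > 0"
    and alpha_def: "\<alpha> = (2 * \<beta> + \<rho>) / (1 - m)"
    and radial: "\<forall>x y. norm x = norm y \<longrightarrow> v x = v y"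
    and pos: "\<forall>x. v x > 0"
    and reg: "C2 v"
    and eq: "\<forall>x. (real CARD('n) - 1) / m * laplacian (\<lambda>y. v y powr m) x
                 + \<alpha> * v x + \<beta> * radial_deriv v x = 0"
  shows "yamabe_profile_ode (real CARD('n)) m \<rho> \<beta> \<alpha> \<phi> \<phi>'
           (\<lambda>t. m * \<phi> t powr m * \<phi>' t / \<phi> t)
           (\<lambda>t. m * \<phi> t powr m * ((m - 1) * (\<phi>' t)\<^sup>2 + \<phi> t * \<phi>'' t) / (\<phi> t)\<^sup>2)"
proof -
  have phi_pos: "\<phi> t > 0" for t
    using pos by (simp add: \<phi>_def)
  have phi_deriv: "(\<phi> has_real_derivative \<phi>' t) (at t)" for t
    using reg unfolding C2_def \<phi>_def \<phi>'_def by (intro DERIV_along_axis) auto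
  have phi'_deriv: "(\<phi>' has_real_derivative \<phi>'' t) (at t)" for t
    using reg unfolding C2_def \<phi>'_def \<phi>''_def by (intro DERIV_along_axis) auto
  note M_deriv = DERIV_powr_fun[OF phi_pos phi_deriv]
  note M'_deriv = DERIV_powr_fun_deriv[OF phi_pos phi_deriv phi'_deriv]
  show ?thesis
  proof unfold_locales
    fix t :: real assume t: "t > 0"
    have "laplacian (\<lambda>y. v y powr m) (t *\<^sub>R axis i 1) =
        m * \<phi> t powr m * ((m - 1) * (\<phi>' t)\<^sup>2 + \<phi> t * \<phi>'' t) / (\<phi> t)\<^sup>2
        + (real CARD('n) - 1) * (m * \<phi> t powr m * \<phi>' t / \<phi> t) / t"
    proof (rule laplacian_radial[OF _ _ _ t])
      show "\<forall>x y. norm x = norm y \<longrightarrow> v x powr m = v y powr m"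
        using radial by metis
      show "((\<lambda>t. v (t *\<^sub>R axis i 1) powr m) has_real_derivative m * \<phi> t powr m * \<phi>' t / \<phi> t) (at t)" for t
        using M_deriv unfolding \<phi>_def .
    qed (rule M'_deriv)
    moreover have "radial_deriv v (t *\<^sub>R axis i 1) = t * \<phi>' t"
      unfolding \<phi>'_def by (rule radial_deriv_axis)
    moreover have "v (t *\<^sub>R axis i 1) = \<phi> t"
      by (simp add: \<phi>_def)
    ultimately show "(real CARD('n) - 1) / m * (m * \<phi> t powr m * ((m - 1) * (\<phi>' t)\<^sup>2 + \<phi> t * \<phi>'' t) / (\<phi> t)\<^sup>2
        + (real CARD('n) - 1) * (m * \<phi> t powr m * \<phi>' t / \<phi> t) / t) + \<alpha> * \<phi> t + \<beta> * (t * \<phi>' t) = 0"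
      using spec[OF eq, of "t *\<^sub>R axis i 1"] by simp
  qed (simp add: n3, (fact m_def rho_pos beta_pos alpha_def phi_pos phi_deriv M_deriv M'_deriv)+)
qed

theorem corollary1p4:
  fixes v :: "real^'n \<Rightarrow> real" and m \<rho> \<beta> \<alpha> :: real
  assumes n3: "CARD('n) \<ge> 3"
    and m_def: "m = (real CARD('n) - 2) / (real CARD('n) + 2)"
    and rho_pos: "\<rho> > 0"
    and beta: "\<beta> > \<rho> / 2"
    and alpha_def: "\<alpha> = (2 * \<beta> + \<rho>) / (1 - m)"
    and radial: "\<forall>x y. norm x = norm y \<longrightarrow> v x = v y"
    and pos: "\<forall>x. v x > 0"
    and reg: "C2 v"
    and eq: "\<forall>x. (real CARD('n) - 1) / m * laplacian (\<lambda>y. v y powr m) x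
                 + \<alpha> * v x + \<beta> * radial_deriv v x = 0"
  shows "\<forall>e::real^'n. norm e = 1 \<longrightarrow>
           ((\<lambda>r. r\<^sup>2 * v (r *\<^sub>R e) powr (4 / (real CARD('n) + 2)))
              \<longlongrightarrow> (real CARD('n) - 1) * (real CARD('n) - 2) / \<rho>) at_top"
proof (intro allI impI)
  fix e :: "real^'n" assume e: "norm e = 1"
  obtain i :: 'n where True by blast
  txt \<open>The hypothesis \<open>\<beta> > \<rho>/2\<close> is only used through \<open>\<beta> > 0\<close>.\<close>
  have beta_pos: "\<beta> > 0" using beta rho_pos by simp
  define \<phi> where "\<phi> = (\<lambda>t. v (t *\<^sub>R axis i 1))"
  define \<phi>' where "\<phi>' = (\<lambda>t. partial i v (t *\<^sub>R axis i 1))"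
  define \<phi>'' where "\<phi>'' = (\<lambda>t. partial i (partial i v) (t *\<^sub>R axis i 1))"
  interpret yamabe_profile_ode "real CARD('n)" m \<rho> \<beta> \<alpha> \<phi> \<phi>'
      "\<lambda>t. m * \<phi> t powr m * \<phi>' t / \<phi> t"
      "\<lambda>t. m * \<phi> t powr m * ((m - 1) * (\<phi>' t)\<^sup>2 + \<phi> t * \<phi>'' t) / (\<phi> t)\<^sup>2"
    unfolding \<phi>_def \<phi>'_def \<phi>''_def
    by (rule yamabe_profile_ode_along_axis[OF n3 m_def rho_pos beta_pos alpha_def radial pos reg eq])
  have exponent: "1 - m = 4 / (real CARD('n) + 2)"
    using m_def by (simp add: field_simps)
  have "eventually (\<lambda>r. r\<^sup>2 * \<phi> r powr (1 - m)
      = r\<^sup>2 * v (r *\<^sub>R e) powr (4 / (real CARD('n) + 2))) at_top"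
    using eventually_gt_at_top[of 0]
  proof eventually_elim
    case (elim r)
    then have "v (r *\<^sub>R e) = \<phi> r"
      using radial e by (simp add: \<phi>_def norm_axis_1)
    then show ?case by (simp add: exponent)
  qed
  from tendsto_cong[OF this] profile_tendsto
  show "((\<lambda>r. r\<^sup>2 * v (r *\<^sub>R e) powr (4 / (real CARD('n) + 2)))
      \<longlongrightarrow> (real CARD('n) - 1) * (real CARD('n) - 2) / \<rho>) at_top"
    by (simp add: A_def)
qed

end
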